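(* Every point of $\Delta$ with both coordinates rational belongs to $\bigcup_{n\ge0}\bigcup_{k_1,\dots,k_n\in\mathbb N}H_{k_1}\circ\cdots\circ H_{k_n}(\partial\Delta)$ (where the term $n=0$ is $\partial\Delta$ itself).
   Context: $\Delta=\{(u,v)\in\mathbb R^2:u\ge0,v\ge0,u+v\le1\}$, with boundary $\partial\Delta$. For $k\in\mathbb N$, $H_k:\Delta\to\Delta$ is $H_k(u,v)=\frac{1}{k(1-v)+1-u}(v,1-v)$. *)

theory Defs
  imports "HOL-Analysis.Analysis"
begin

definition Delta :: "(real \<times> real) set" where
  "Delta = {(u, v). u \<ge> 0 \<and> v \<ge> 0 \<and> u + v \<le> 1}"

definition H :: "nat \<Rightarrow> real \<times> real \<Rightarrow> real \<times> real" where
  "H k p = (let u = fst p; v = snd p; d = real k * (1 - v) + 1 - u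
            in (v / d, (1 - v) / d))"

definition Hcomp :: "nat list \<Rightarrow> real \<times> real \<Rightarrow> real \<times> real" where
  "Hcomp ks = foldr (\<lambda>k f. H k \<circ> f) ks id"

end

(* Descent on the common denominator. If (x, y) lies in the open triangle and q x, q y are
   integers, then for the unique k with 1 - x - y <= k y < 1 - x (necessarily k >= 1) the point
   (x, y) has a preimage under H k in Delta whose coordinates become integers after
   multiplication by (x + y) q, an integer strictly smaller than q. Since denominators cannot
   decrease forever, iterating reaches a point of the boundary. *)

theory Submission
  imports Defs
begin

lemma Hcomp_Nil [simp]: "Hcomp [] = id"
  by (simp add: Hcomp_def)

lemma Hcomp_Cons [simp]: "Hcomp (k # ks) = H k \<circ> Hcomp ks"
  by (simp add: Hcomp_def)

lemma interior_Delta_subset: "interior Delta \<subseteq> {(x, y). 0 < x \<and> 0 < y \<and> x + y < 1}"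
proof -
  have "interior Delta \<subseteq> interior {p. (1, 0) \<bullet> p \<ge> (0::real)}"
    and "interior Delta \<subseteq> interior {p. (0, 1) \<bullet> p \<ge> (0::real)}"
    and "interior Delta \<subseteq> interior {p. (-1, -1) \<bullet> p \<ge> (-1::real)}"
    by (auto intro!: interior_mono simp: Delta_def)
  moreover have "(1, 0) \<noteq> (0 :: real \<times> real)" "(0, 1) \<noteq> (0 :: real \<times> real)" "(-1, -1) \<noteq> (0 :: real \<times> real)"
    by (simp_all add: zero_prod_def)
  ultimately show ?thesis
    by auto
qed

lemma Delta_edge_in_frontier:
  assumes "(x, y) \<in> Delta" and "x = 0 \<or> y = 0 \<or> x + y = 1"
  shows "(x, y) \<in> frontier Delta"
  using assms closure_subset interior_Delta_subset by (auto simp: frontier_def)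

text \<open>Solving \<open>H k (u, v) = (x, y)\<close>: the quotient of the two coordinates gives
  \<open>v = x / (x + y)\<close>, and then the denominator of \<open>H k\<close> must equal \<open>1 / (x + y)\<close>.\<close>

definition H_inv :: "nat \<Rightarrow> real \<times> real \<Rightarrow> real \<times> real" where
  "H_inv k p = (let x = fst p; y = snd p in ((real k * y + x + y - 1) / (x + y), x / (x + y)))"

lemma H_Pair: "H k (u, v) = (v / (real k * (1 - v) + 1 - u), (1 - v) / (real k * (1 - v) + 1 - u))"
  by (simp add: H_def Let_def)

lemma H_H_inv:
  assumes "x + y \<noteq> 0"
  shows "H k (H_inv k (x, y)) = (x, y)"
proof -
  define u v where "u = (real k * y + x + y - 1) / (x + y)" and "v = x / (x + y)"
  have inv: "H_inv k (x, y) = (u, v)"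
    by (simp add: H_inv_def Let_def u_def v_def)
  have one_minus_v: "1 - v = y / (x + y)"
    using assms by (simp add: v_def field_simps)
  have "real k * (1 - v) + 1 - u = 1 / (x + y)"
    using assms by (simp add: one_minus_v u_def field_simps)
  then show ?thesis
    using assms by (simp add: inv H_Pair one_minus_v) (simp add: v_def)
qed

lemma H_inv_in_Delta:
  assumes "0 \<le> x" "0 < x + y" "1 - x - y \<le> real k * y" "real k * y \<le> 1 - x"
  shows "H_inv k (x, y) \<in> Delta"
  using assms by (simp add: H_inv_def Delta_def Let_def divide_simps)

lemma exists_H_inv_index:
  assumes "0 < y" "x + y < 1"
  obtains k :: nat where "1 \<le> k" "1 - x - y \<le> real k * y" "real k * y < 1 - x"
proof
  define k where "k = nat \<lceil>(1 - x - y) / y\<rceil>"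
  have pos: "0 < (1 - x - y) / y"
    using assms by simp
  then have k: "real k = of_int \<lceil>(1 - x - y) / y\<rceil>"
    by (simp add: k_def)
  have "0 < real k"
    using k pos le_of_int_ceiling[of "(1 - x - y) / y"] by linarith
  then show "1 \<le> k"
    by simp
  have "(1 - x - y) / y \<le> real k" and "real k < (1 - x - y) / y + 1"
    using k by linarith+
  then show "1 - x - y \<le> real k * y" and "real k * y < 1 - x"
    using assms(1) by (simp_all add: field_simps)
qed

definition common_denominator :: "nat \<Rightarrow> real \<times> real \<Rightarrow> bool" where
  "common_denominator q p \<longleftrightarrow> 0 < q \<and> real q * fst p \<in> \<int> \<and> real q * snd p \<in> \<int>"

lemma rational_point_common_denominator:
  assumes "x \<in> \<rat>" "y \<in> \<rat>"
  obtains q where "common_denominator q (x, y)"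
proof -
  obtain a m where x: "x = of_int a / of_int m" "0 < m"
    using assms(1) Rats_cases' by metis
  obtain b n where y: "y = of_int b / of_int n" "0 < n"
    using assms(2) Rats_cases' by metis
  define q where "q = nat (m * n)"
  have q: "real q = of_int m * of_int n"
    using x(2) y(2) by (simp add: q_def)
  have "real q * x = of_int (a * n)" and "real q * y = of_int (b * m)"
    using x y by (simp_all add: q)
  moreover have "0 < q"
    using x(2) y(2) by (simp add: q_def)
  ultimately have "common_denominator q (x, y)"
    unfolding common_denominator_def by (metis Ints_of_int fst_conv snd_conv)
  then show ?thesis ..
qed

lemma common_denominator_H_inv:
  assumes "common_denominator q (x, y)" "0 < x" "0 < y" "x + y < 1"
  obtains q' where "q' < q" "common_denominator q' (H_inv k (x, y))"
proof -
  have "real q * (x + y) \<in> \<int>"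
    using assms(1) by (simp add: common_denominator_def distrib_left)
  then obtain z where z: "real q * (x + y) = of_int z"
    by (rule Ints_cases)
  have "(0::real) \<le> of_int z"
    unfolding z[symmetric] using assms(2,3) by simp
  define q' where "q' = nat z"
  have q': "real q' = real q * (x + y)"
    using \<open>0 \<le> real_of_int z\<close> by (simp add: q'_def z)
  have "real q' < real q"
    using q' assms(1,4) by (simp add: common_denominator_def)
  moreover have "common_denominator q' (H_inv k (x, y))"
  proof -
    have "0 < real q'"
      using q' assms(1-3) by (simp add: common_denominator_def)
    moreover have "real q' * fst (H_inv k (x, y)) = real k * (real q * y) + real q * x + real q * y - real q"
      using q' assms(2,3) by (simp add: H_inv_def field_simps)
    moreover have "real q' * snd (H_inv k (x, y)) = real q * x"
      using q' assms(2,3) by (simp add: H_inv_def)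
    ultimately show ?thesis
      using assms(1) by (simp add: common_denominator_def)
  qed
  ultimately show ?thesis
    using that by simp
qed

lemma Delta_common_denominator_reachable:
  assumes "common_denominator q p" "p \<in> Delta"
  shows "\<exists>ks. (\<forall>k\<in>set ks. 1 \<le> k) \<and> p \<in> Hcomp ks ` frontier Delta"
  using assms
proof (induction q arbitrary: p rule: less_induct)
  case (less q)
  obtain x y where p: "p = (x, y)"
    by fastforce
  show ?case
  proof (cases "0 < x \<and> 0 < y \<and> x + y < 1")
    case False
    then have "p \<in> Hcomp [] ` frontier Delta"
      using less.prems(2) Delta_edge_in_frontier by (auto simp: p Delta_def)
    then show ?thesis
      by (intro exI[of _ "[]"]) simp
  next
    case True
    then obtain k where k: "1 \<le> k" "1 - x - y \<le> real k * y" "real k * y < 1 - x"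
      using exists_H_inv_index by blast
    obtain q' where "q' < q" "common_denominator q' (H_inv k (x, y))"
      using common_denominator_H_inv less.prems(1) True unfolding p by blast
    moreover have "H_inv k (x, y) \<in> Delta"
      using H_inv_in_Delta True k by simp
    ultimately obtain ks where ks: "\<forall>k\<in>set ks. 1 \<le> k" "H_inv k (x, y) \<in> Hcomp ks ` frontier Delta"
      using less.IH by blast
    have "H k (H_inv k (x, y)) = p"
      using H_H_inv True p by simp
    then have "p \<in> Hcomp (k # ks) ` frontier Delta"
      using ks(2) by force
    then show ?thesis
      using ks(1) k(1) by (metis set_ConsD)
  qed
qed

theorem proposition3p9:
  fixes u v :: real
  assumes "(u, v) \<in> Delta" and "u \<in> \<rat>" and "v \<in> \<rat>"
  shows "\<exists>ks. (\<forall>k\<in>set ks. k \<ge> 1) \<and> (u, v) \<in> Hcomp ks ` frontier Delta"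
proof -
  obtain q where "common_denominator q (u, v)"
    using assms(2,3) by (rule rational_point_common_denominator)
  then show ?thesis
    using assms(1) by (rule Delta_common_denominator_reachable)
qed

end
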